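(* For every permutation $\sigma$ and every Cayley permutation $y$, $$\mathcal{S}(\sigma)=\gamma\bigl(X[\sigma^{-1}]\bigr)\qquad\text{and}\qquad\gamma\bigl(X[y]\bigr)=\mathcal{S}\bigl(\gamma(y)\bigr).$$
   Context: A Cayley permutation of length $n$ is a word of positive integers in which every integer from $1$ to its maximum occurs. Containment $y\le x$: indices $i_1<\dots<i_k$ ($k$ the length of $y$) with $x(i_s)<x(i_t)\iff y(s)<y(t)$ and $x(i_s)=x(i_t)\iff y(s)=y(t)$; otherwise $x$ avoids $y$. $\mathcal{S}$ is the set of permutations, $\mathcal{S}(\tau)$ those avoiding $\tau$. For $x$ of length $n$, $\gamma(x)$ is the permutation obtained by sorting the pairs $(x(i),i)$ increasingly by first coordinate, ties by decreasing second coordinate, and reading the second coordinates; $\gamma(E)=\{\gamma(x):x\in E\}$. $x\sim y$ iff $\gamma(x)=\gamma(y)$, $[y]$ is the class of $y$, and $E[y]$ is the set of elements of $E$ avoiding every element of $[y]$. The map $\eta$: for $\pi\in\mathcal{S}_n$ and $i\in[n]$, let $J(i)=0$ if $\pi(i)=1$ and otherwise let $J(i)$ be the index with $\pi(J(i))=\pi(i)-1$. The sites of $\pi$ are the site before $\pi(1)$ and the site after $\pi(i)$ for each $i\in[n]$. The site before $\pi(1)$ is $\eta$-active; the site after $\pi(i)$ is $\eta$-active iff $J(i)<i$, or $i<n$ and $\pi(i)<\pi(i+1)$. Define $\tilde\upsilon(\pi)(j)$ to be the number of $\eta$-active sites to the left of $\pi(j)$ (so consecutive active sites are numbered $1,2,\dots$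 and entries between active sites $k$ and $k+1$ get label $k$). Then $\eta(\pi)$ is the word of length $n$ with $\eta(\pi)(\pi(j))=\tilde\upsilon(\pi)(j)$ for all $j$, i.e. $\eta(\pi)=\tilde\upsilon(\pi)\circ\pi^{-1}$. Let $X=\eta(\mathcal{S})$. *)

theory Defs
  imports Main "HOL-Library.Product_Lexorder"
begin

(* Words are lists of naturals; position i (1-based in the paper) is list index i-1. *)

definition cayley :: "nat list \<Rightarrow> bool" where
  "cayley x \<longleftrightarrow> (\<forall>v\<in>set x. 1 \<le> v) \<and> (\<forall>k. 1 \<le> k \<and> k \<le> Max (insert 0 (set x)) \<longrightarrow> k \<in> set x)"

definition is_perm :: "nat list \<Rightarrow> bool" where
  "is_perm x \<longleftrightarrow> cayley x \<and> distinct x"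

definition contains :: "nat list \<Rightarrow> nat list \<Rightarrow> bool" where
  "contains x y \<longleftrightarrow> (\<exists>idx :: nat list. length idx = length y \<and> sorted_wrt (<) idx
      \<and> (\<forall>i\<in>set idx. i < length x)
      \<and> (\<forall>s<length y. \<forall>t<length y.
            (x ! (idx ! s) < x ! (idx ! t) \<longleftrightarrow> y ! s < y ! t)
          \<and> (x ! (idx ! s) = x ! (idx ! t) \<longleftrightarrow> y ! s = y ! t)))"

definition avoids :: "nat list \<Rightarrow> nat list \<Rightarrow> bool" where
  "avoids x y \<longleftrightarrow> \<not> contains x y"

definition Av_perm :: "nat list \<Rightarrow> nat list set" where
  "Av_perm \<tau> = {\<pi>. is_perm \<pi> \<and> avoids \<pi> \<tau>}"

definition gamma :: "nat list \<Rightarrow> nat list" where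
  "gamma x = map snd (sort_key (\<lambda>(v, i). (v, - int i)) (zip x [1..<Suc (length x)]))"

definition pos :: "nat list \<Rightarrow> nat \<Rightarrow> nat" where
  "pos \<pi> v = Suc (LEAST i. i < length \<pi> \<and> \<pi> ! i = v)"

definition inv_perm :: "nat list \<Rightarrow> nat list" where
  "inv_perm \<sigma> = map (pos \<sigma>) [1..<Suc (length \<sigma>)]"

definition etaJ :: "nat list \<Rightarrow> nat \<Rightarrow> nat" where
  "etaJ \<pi> i = (if \<pi> ! (i - 1) = 1 then 0 else pos \<pi> (\<pi> ! (i - 1) - 1))"

definition eta_active :: "nat list \<Rightarrow> nat \<Rightarrow> bool" where
  "eta_active \<pi> i \<longleftrightarrow> etaJ \<pi> i < i \<or> (i < length \<pi> \<and> \<pi> ! (i - 1) < \<pi> ! i)"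

(* number of eta-active sites to the left of pi(j): the initial site plus active sites after pi(i), i<j *)
definition upsilon :: "nat list \<Rightarrow> nat \<Rightarrow> nat" where
  "upsilon \<pi> j = Suc (card {i. 1 \<le> i \<and> i < j \<and> eta_active \<pi> i})"

(* eta(pi)(pi(j)) = upsilon(pi)(j) *)
definition eta :: "nat list \<Rightarrow> nat list" where
  "eta \<pi> = map (\<lambda>k. upsilon \<pi> (pos \<pi> k)) [1..<Suc (length \<pi>)]"

definition Xset :: "nat list set" where
  "Xset = eta ` {\<pi>. is_perm \<pi>}"

definition cls :: "nat list \<Rightarrow> nat list set" where
  "cls y = {z. cayley z \<and> gamma z = gamma y}"

definition avoid_class :: "nat list set \<Rightarrow> nat list \<Rightarrow> nat list set" where
  "avoid_class E y = {x\<in>E. \<forall>z\<in>cls y. avoids x z}"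

end

theory Submission
  imports Defs
begin

text \<open>
  \<gamma>(x) is the unique arrangement of the positions of x that is strictly increasing for the
  key (x(i), -i). Restricting \<gamma>(x) to the positions in a set J therefore gives, up to
  relabelling, \<gamma> of the subword of x at J. Consequently x contains a member of the class
  [y] iff \<gamma>(x) contains \<gamma>(y): an occurrence of z \<sim> y in x yields an occurrence of
  \<gamma>(z) = \<gamma>(y) in \<gamma>(x); conversely an occurrence of \<gamma>(y) in \<gamma>(x) is the relabelled
  \<gamma> of a subword w of x, and two permutations of the same pattern coincide, so
  \<gamma>(w) = \<gamma>(y) and the standardisation of w lies in [y]. Hence \<gamma> maps X[y] onto the
  elements of \<gamma>(X) avoiding \<gamma>(y).

  It remains that \<gamma>(X) = S, i.e. \<gamma>(\<eta>(\<pi>)) = \<pi>. The labels \<upsilon>(\<pi>)(j) weakly increase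
  with j, and strictly between positions a < b with \<pi>(a) < \<pi>(b), since some ascent
  \<pi>(i) < \<pi>(i+1) with a \<le> i < b makes the site after \<pi>(i) active. So sorting the values
  of \<pi> by label, ties by decreasing value, lists them in the order \<pi>. The same
  argument with labels j gives \<gamma>(\<sigma>\<inverse>) = \<sigma>.
\<close>

lemma insort_key_map: "insort_key f (g a) (map g xs) = map g (insort_key (\<lambda>a. f (g a)) a xs)"
  by (induction xs) auto

lemma sort_key_map: "sort_key f (map g xs) = map g (sort_key (\<lambda>a. f (g a)) xs)"
  by (induction xs) (auto simp: insort_key_map)

lemma sorted_wrt_key_unique:
  fixes f :: "'a \<Rightarrow> 'b::linorder"
  assumes "sorted_wrt (\<lambda>a b. f a < f b) xs" "sorted_wrt (\<lambda>a b. f a < f b) ys" "set xs = set ys"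
  shows "xs = ys"
proof -
  have "map f xs = map f ys"
    using assms by (intro strict_sorted_equal) (simp_all add: sorted_wrt_map)
  moreover have "inj_on f (set xs)"
    using assms(1) by (simp add: inj_on_def sorted_wrt_map[symmetric] strict_sorted_iff distinct_map)
  ultimately show ?thesis
    using assms(3) map_inj_on[of f xs ys] by simp
qed

lemma filter_conv_map_nth: "filter P xs = map (nth xs) (filter (\<lambda>i. P (xs ! i)) [0..<length xs])"
  using filter_map[of P "nth xs" "[0..<length xs]"] by (simp add: comp_def map_nth)

lemma filter_mem_map_nth:
  assumes "distinct xs" "sorted_wrt (<) I" "\<forall>i\<in>set I. i < length xs"
  shows "filter (\<lambda>v. v \<in> set (map (nth xs) I)) xs = map (nth xs) I"
proof -
  have "filter (\<lambda>i. xs ! i \<in> set (map (nth xs) I)) [0..<length xs]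
      = filter (\<lambda>i. i \<in> set I) [0..<length xs]"
    using assms(1,3) by (intro filter_cong) (auto simp: nth_eq_iff_index_eq)
  also have "\<dots> = I"
    using assms(2,3) by (intro strict_sorted_equal) (auto simp: sorted_wrt_filter)
  finally show ?thesis
    by (simp add: filter_conv_map_nth[of _ xs])
qed

lemma exists_ascent_between:
  fixes p :: "'a::linorder list"
  shows "a < b \<Longrightarrow> p ! a < p ! b \<Longrightarrow> \<exists>i. a \<le> i \<and> i < b \<and> p ! i < p ! Suc i"
proof (induction b)
  case (Suc b)
  show ?case
  proof (cases "p ! b < p ! Suc b")
    case True
    then show ?thesis
      using Suc.prems(1) by (intro exI[of _ b]) simp
  next
    case False
    with Suc.prems have "a < b" "p ! a < p ! b"
      by (auto simp: less_Suc_eq)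
    then show ?thesis
      using Suc.IH less_SucI by blast
  qed
qed simp

lemma cayley_if_set_eq_interval: "set z = {1..m} \<Longrightarrow> cayley z"
  unfolding cayley_def by (auto intro: order.trans[OF _ Max.boundedI])

lemma is_perm_iff: "is_perm p \<longleftrightarrow> distinct p \<and> set p = {1..length p}"
proof
  assume perm: "is_perm p"
  define M where "M = Max (insert 0 (set p))"
  have positive: "\<forall>v\<in>set p. 1 \<le> v" and onto: "\<forall>k. 1 \<le> k \<and> k \<le> M \<longrightarrow> k \<in> set p"
    using perm unfolding is_perm_def cayley_def M_def by blast+
  have bounded: "\<forall>v\<in>set p. v \<le> M"
    unfolding M_def by simp
  have set_p: "set p = {1..M}"
    unfolding set_eq_iff atLeastAtMost_iff using positive onto bounded by blast
  have "distinct p"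
    using perm by (simp add: is_perm_def)
  moreover from this have "length p = M"
    using distinct_card[of p] set_p by simp
  ultimately show "distinct p \<and> set p = {1..length p}"
    using set_p by simp
next
  assume "distinct p \<and> set p = {1..length p}"
  then show "is_perm p"
    unfolding is_perm_def using cayley_if_set_eq_interval by blast
qed

lemma perm_nth_eq_card:
  assumes "is_perm p" "s < length p"
  shows "p ! s = card {t. t < length p \<and> p ! t \<le> p ! s}"
proof -
  have set_p: "set p = {1..length p}" and "distinct p"
    using assms(1) by (simp_all add: is_perm_iff)
  have "nth p ` {t. t < length p \<and> p ! t \<le> p ! s} = {v \<in> set p. v \<le> p ! s}"
    by (auto simp: in_set_conv_nth)
  also have "\<dots> = {1..p ! s}"
    using nth_mem[OF assms(2)] unfolding set_p by auto
  finally have "card (nth p ` {t. t < length p \<and> p ! t \<le> p ! s}) = p ! s"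
    by simp
  moreover have "inj_on (nth p) {t. t < length p \<and> p ! t \<le> p ! s}"
    using inj_on_nth[OF \<open>distinct p\<close>] by simp
  ultimately show ?thesis
    by (simp add: card_image)
qed

lemma pos_nth: "distinct p \<Longrightarrow> a < length p \<Longrightarrow> pos p (p ! a) = Suc a"
  unfolding pos_def by (auto intro: Least_equality simp: nth_eq_iff_index_eq)

definition gamma_key :: "nat list \<Rightarrow> nat \<Rightarrow> nat \<times> int" where
  "gamma_key x i = (x ! (i - 1), - int i)"

lemma gamma_key_less_iff:
  "gamma_key x i < gamma_key x j \<longleftrightarrow> x ! (i - 1) < x ! (j - 1) \<or> x ! (i - 1) = x ! (j - 1) \<and> j < i"
  by (auto simp: gamma_key_def less_prod_def)

lemma gamma_eq_sort_key: "gamma x = sort_key (gamma_key x) [1..<Suc (length x)]"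
proof -
  let ?pair = "\<lambda>i. (x ! (i - 1), i)"
  have "zip x [1..<Suc (length x)] = map ?pair [1..<Suc (length x)]"
    by (rule nth_equalityI) (auto simp del: upt_Suc)
  moreover have "(\<lambda>(v, i). (v, - int i)) \<circ> ?pair = gamma_key x"
    by (auto simp: gamma_key_def)
  ultimately show ?thesis
    by (simp add: gamma_def sort_key_map comp_def)
qed

lemma set_gamma: "set (gamma x) = {1..length x}"
  by (auto simp: gamma_eq_sort_key)

lemma distinct_gamma: "distinct (gamma x)"
  by (simp add: gamma_eq_sort_key)

lemma length_gamma: "length (gamma x) = length x"
  by (simp add: gamma_eq_sort_key del: upt_Suc)

lemma sorted_wrt_gamma: "sorted_wrt (\<lambda>i j. gamma_key x i < gamma_key x j) (gamma x)"
proof -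
  have "inj (gamma_key x)"
    by (auto simp: gamma_key_def inj_def)
  then have "sorted (map (gamma_key x) (gamma x))" "distinct (map (gamma_key x) (gamma x))"
    by (simp_all add: gamma_eq_sort_key distinct_map inj_on_def)
  then have "sorted_wrt (<) (map (gamma_key x) (gamma x))"
    by (simp add: strict_sorted_iff)
  then show ?thesis
    by (simp add: sorted_wrt_map)
qed

lemma gamma_eqI:
  assumes "set L = {1..length x}" "sorted_wrt (\<lambda>i j. gamma_key x i < gamma_key x j) L"
  shows "gamma x = L"
  using sorted_wrt_key_unique[OF sorted_wrt_gamma assms(2)] assms(1) set_gamma by simp

lemma is_perm_gamma: "is_perm (gamma x)"
  by (simp add: is_perm_iff distinct_gamma set_gamma length_gamma)

definition order_iso :: "nat list \<Rightarrow> nat list \<Rightarrow> bool" where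
  "order_iso a b \<longleftrightarrow> length a = length b \<and> (\<forall>s<length a. \<forall>t<length a.
      (a ! s < a ! t \<longleftrightarrow> b ! s < b ! t) \<and> (a ! s = a ! t \<longleftrightarrow> b ! s = b ! t))"

lemma contains_iff_order_iso:
  "contains x y \<longleftrightarrow>
    (\<exists>J. sorted_wrt (<) J \<and> (\<forall>j\<in>set J. j < length x) \<and> order_iso (map (nth x) J) y)"
  unfolding contains_def order_iso_def by auto

lemma order_iso_sym: "order_iso a b \<Longrightarrow> order_iso b a"
  unfolding order_iso_def by auto

lemma order_iso_trans: "order_iso a b \<Longrightarrow> order_iso b c \<Longrightarrow> order_iso a c"
  unfolding order_iso_def by auto

lemma order_iso_map_strict_mono: "strict_mono_on (set a) h \<Longrightarrow> order_iso a (map h a)"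
  unfolding order_iso_def strict_mono_on_def
  by (auto dest: nth_mem) (metis linorder_neqE nth_mem order.asym)+

lemma contains_if_order_iso_filter: "order_iso (filter P x) y \<Longrightarrow> contains x y"
  unfolding contains_iff_order_iso filter_conv_map_nth[of P x]
  by (intro exI[of _ "filter (\<lambda>i. P (x ! i)) [0..<length x]"]) (simp add: sorted_wrt_filter)

lemma gamma_order_iso:
  assumes "order_iso a b"
  shows "gamma a = gamma b"
proof (rule gamma_eqI[symmetric])
  have len: "length a = length b"
    using assms by (simp add: order_iso_def)
  then show "set (gamma a) = {1..length b}"
    by (simp add: set_gamma)
  show "sorted_wrt (\<lambda>i j. gamma_key b i < gamma_key b j) (gamma a)"
  proof (rule sorted_wrt_mono_rel[OF _ sorted_wrt_gamma])
    fix i j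
    assume "i \<in> set (gamma a)" "j \<in> set (gamma a)" and less: "gamma_key a i < gamma_key a j"
    then have "i - 1 < length a" "j - 1 < length a"
      by (auto simp: set_gamma)
    then have "(a ! (i - 1) < a ! (j - 1)) = (b ! (i - 1) < b ! (j - 1))"
      "(a ! (i - 1) = a ! (j - 1)) = (b ! (i - 1) = b ! (j - 1))"
      using assms by (simp_all add: order_iso_def)
    then show "gamma_key b i < gamma_key b j"
      using less by (simp add: gamma_key_less_iff)
  qed
qed

lemma perm_order_iso_eq:
  assumes "is_perm p" "is_perm q" "order_iso p q"
  shows "p = q"
proof (rule nth_equalityI)
  show len: "length p = length q"
    using assms(3) by (simp add: order_iso_def)
  fix s
  assume s: "s < length p"
  have "p ! t \<le> p ! s \<longleftrightarrow> q ! t \<le> q ! s" if "t < length p" for t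
  proof -
    have "(p ! t < p ! s \<longleftrightarrow> q ! t < q ! s) \<and> (p ! t = p ! s \<longleftrightarrow> q ! t = q ! s)"
      using assms(3) s that unfolding order_iso_def by blast
    then show ?thesis
      by (simp add: le_less)
  qed
  then have same_rank_set:
    "{t. t < length p \<and> p ! t \<le> p ! s} = {t. t < length q \<and> q ! t \<le> q ! s}"
    using len by (intro Collect_cong) auto
  have "p ! s = card {t. t < length p \<and> p ! t \<le> p ! s}"
    by (rule perm_nth_eq_card[OF assms(1) s])
  also have "\<dots> = q ! s"
    unfolding same_rank_set using s len by (intro perm_nth_eq_card[OF assms(2), symmetric]) simp
  finally show "p ! s = q ! s" .
qed

definition standardization :: "nat list \<Rightarrow> nat list" where
  "standardization w = map (\<lambda>v. card {u \<in> set w. u \<le> v}) w"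

lemma cayley_standardization: "cayley (standardization w)"
  and order_iso_standardization: "order_iso w (standardization w)"
proof -
  let ?rank = "\<lambda>v. card {u \<in> set w. u \<le> v}"
  have mono: "strict_mono_on (set w) ?rank"
  proof (rule strict_mono_onI)
    fix a b
    assume "a \<in> set w" "b \<in> set w" "a < b"
    then have "{u \<in> set w. u \<le> a} \<subset> {u \<in> set w. u \<le> b}"
      by (auto intro: psubsetI[where ?B = "{u \<in> set w. u \<le> b}"] dest: order.strict_trans1)
    then show "?rank a < ?rank b"
      by (simp add: psubset_card_mono)
  qed
  then show "order_iso w (standardization w)"
    unfolding standardization_def by (rule order_iso_map_strict_mono)
  have "?rank ` set w \<subseteq> {1..card (set w)}"
    by (auto simp: Suc_le_eq card_gt_0_iff intro: card_mono)
  moreover have "card (?rank ` set w) = card (set w)"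
    using card_image[OF strict_mono_on_imp_inj_on[OF mono]] .
  ultimately have "?rank ` set w = {1..card (set w)}"
    by (simp add: card_subset_eq)
  then show "cayley (standardization w)"
    unfolding standardization_def by (intro cayley_if_set_eq_interval[where m = "card (set w)"]) simp
qed

text \<open>Positions are 1-based: position v of the subword at J is position J!(v-1)+1 of x.\<close>

lemma strict_mono_on_subword_position:
  "sorted_wrt (<) J \<Longrightarrow> strict_mono_on {1..length J} (\<lambda>v. Suc (J ! (v - 1)))"
  by (rule strict_mono_onI) (simp add: sorted_wrt_nth_less)

lemma gamma_subword:
  assumes J: "sorted_wrt (<) J" "\<forall>j\<in>set J. j < length x"
  shows "filter (\<lambda>v. v - 1 \<in> set J) (gamma x)
       = map (\<lambda>v. Suc (J ! (v - 1))) (gamma (map (nth x) J))"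
proof (rule sorted_wrt_key_unique[where f = "gamma_key x"])
  let ?w = "map (nth x) J" and ?pos = "\<lambda>v. Suc (J ! (v - 1))"
  show "sorted_wrt (\<lambda>i j. gamma_key x i < gamma_key x j) (filter (\<lambda>v. v - 1 \<in> set J) (gamma x))"
    by (rule sorted_wrt_filter[OF sorted_wrt_gamma])
  have "sorted_wrt (\<lambda>i j. gamma_key x (?pos i) < gamma_key x (?pos j)) (gamma ?w)"
  proof (rule sorted_wrt_mono_rel[OF _ sorted_wrt_gamma])
    fix i j
    assume "i \<in> set (gamma ?w)" "j \<in> set (gamma ?w)" and less: "gamma_key ?w i < gamma_key ?w j"
    then have "i - 1 < length J" "j - 1 < length J" "1 \<le> i" "1 \<le> j"
      by (auto simp: set_gamma)
    then have "j < i \<Longrightarrow> J ! (j - 1) < J ! (i - 1)"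
      using sorted_wrt_nth_less[OF J(1)] by simp
    then show "gamma_key x (?pos i) < gamma_key x (?pos j)"
      using less \<open>i - 1 < length J\<close> \<open>j - 1 < length J\<close> by (auto simp: gamma_key_less_iff)
  qed
  then show "sorted_wrt (\<lambda>i j. gamma_key x i < gamma_key x j) (map ?pos (gamma ?w))"
    by (simp add: sorted_wrt_map)
  have "set (map ?pos (gamma ?w)) = ?pos ` Suc ` {..<length J}"
    by (simp add: set_gamma image_Suc_lessThan)
  also have "\<dots> = Suc ` set J"
    by (auto simp: image_image in_set_conv_nth intro!: imageI)
  also have "\<dots> = set (filter (\<lambda>v. v - 1 \<in> set J) (gamma x))"
    using J(2) by (force simp: set_gamma)
  finally show "set (filter (\<lambda>v. v - 1 \<in> set J) (gamma x)) = set (map ?pos (gamma ?w))" ..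
qed

lemma contains_gamma_if_contains_class:
  assumes "z \<in> cls y" "contains x z"
  shows "contains (gamma x) (gamma y)"
proof -
  obtain J where J: "sorted_wrt (<) J" "\<forall>j\<in>set J. j < length x"
    and iso: "order_iso (map (nth x) J) z"
    using assms(2) unfolding contains_iff_order_iso by blast
  let ?pos = "\<lambda>v. Suc (J ! (v - 1))"
  have gamma_subword_eq: "gamma (map (nth x) J) = gamma y"
    using gamma_order_iso[OF iso] assms(1) by (simp add: cls_def)
  then have "set (gamma y) = {1..length J}"
    by (metis length_map set_gamma)
  then have "order_iso (gamma y) (map ?pos (gamma y))"
    using strict_mono_on_subword_position[OF J(1)] by (simp add: order_iso_map_strict_mono)
  moreover have "filter (\<lambda>v. v - 1 \<in> set J) (gamma x) = map ?pos (gamma y)"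
    using gamma_subword[OF J] gamma_subword_eq by simp
  ultimately show ?thesis
    by (metis contains_if_order_iso_filter order_iso_sym)
qed

lemma contains_class_if_contains_gamma:
  assumes "contains (gamma x) (gamma y)"
  shows "\<exists>z\<in>cls y. contains x z"
proof -
  obtain I where I: "sorted_wrt (<) I" "\<forall>i\<in>set I. i < length (gamma x)"
    and iso: "order_iso (map (nth (gamma x)) I) (gamma y)"
    using assms unfolding contains_iff_order_iso by blast
  define V where "V = set (map (nth (gamma x)) I)"
  define J where "J = filter (\<lambda>j. Suc j \<in> V) [0..<length x]"
  let ?w = "map (nth x) J" and ?pos = "\<lambda>v. Suc (J ! (v - 1))"
  have J: "sorted_wrt (<) J" "\<forall>j\<in>set J. j < length x"
    by (simp_all add: J_def sorted_wrt_filter)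
  have "map ?pos (gamma ?w) = filter (\<lambda>v. v - 1 \<in> set J) (gamma x)"
    using gamma_subword[OF J] by simp
  also have "\<dots> = filter (\<lambda>v. v \<in> V) (gamma x)"
    by (rule filter_cong) (auto simp: J_def set_gamma)
  also have "\<dots> = map (nth (gamma x)) I"
    unfolding V_def by (rule filter_mem_map_nth[OF distinct_gamma I])
  finally have "order_iso (map ?pos (gamma ?w)) (gamma y)"
    using iso by simp
  moreover have "order_iso (gamma ?w) (map ?pos (gamma ?w))"
    using strict_mono_on_subword_position[OF J(1)] by (simp add: order_iso_map_strict_mono set_gamma)
  ultimately have "gamma ?w = gamma y"
    by (meson is_perm_gamma order_iso_trans perm_order_iso_eq)
  then have "standardization ?w \<in> cls y"
    by (simp add: cls_def cayley_standardization flip: gamma_order_iso[OF order_iso_standardization])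
  moreover have "contains x (standardization ?w)"
    unfolding contains_iff_order_iso using J order_iso_standardization by blast
  ultimately show ?thesis
    by blast
qed

lemma gamma_image_avoid_class: "gamma ` avoid_class E y = {p \<in> gamma ` E. avoids p (gamma y)}"
proof -
  have "avoid_class E y = {x \<in> E. avoids (gamma x) (gamma y)}"
    unfolding avoid_class_def avoids_def
    using contains_gamma_if_contains_class contains_class_if_contains_gamma by blast
  then show ?thesis
    by auto
qed

text \<open>The word below is f \<circ> p\<inverse>; \<eta>(p) is the case f = \<upsilon>(p) and p\<inverse> the case f = id.\<close>

lemma gamma_map_pos:
  assumes perm: "is_perm p"
    and weak: "\<And>a b. a < b \<Longrightarrow> b < length p \<Longrightarrow> f (Suc a) \<le> f (Suc b)"
    and strict: "\<And>a b. a < b \<Longrightarrow> b < length p \<Longrightarrow> p ! a < p ! b \<Longrightarrow> f (Suc a) < f (Suc b)"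
  shows "gamma (map (\<lambda>k. f (pos p k)) [1..<Suc (length p)]) = p"
proof (rule gamma_eqI)
  let ?x = "map (\<lambda>k. f (pos p k)) [1..<Suc (length p)]"
  have set_p: "set p = {1..length p}" and "distinct p"
    using perm by (simp_all add: is_perm_iff)
  have x_at: "?x ! (p ! a - 1) = f (Suc a)" if "a < length p" for a
  proof -
    have "p ! a \<in> {1..length p}"
      using nth_mem[OF that] set_p by blast
    then show ?thesis
      using pos_nth[OF \<open>distinct p\<close> that] by (auto simp del: upt_Suc)
  qed
  show "set p = {1..length ?x}"
    using set_p by (simp del: upt_Suc)
  show "sorted_wrt (\<lambda>i j. gamma_key ?x i < gamma_key ?x j) p"
    unfolding sorted_wrt_iff_nth_less
  proof (intro allI impI)
    fix a b
    assume ab: "a < b" "b < length p"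
    have "p ! a \<noteq> p ! b"
      using \<open>distinct p\<close> ab by (simp add: nth_eq_iff_index_eq)
    then show "gamma_key ?x (p ! a) < gamma_key ?x (p ! b)"
      using weak[OF ab] strict[OF ab] x_at[of a] x_at[of b] ab
      by (auto simp: gamma_key_less_iff linorder_neq_iff)
  qed
qed

lemma gamma_inv_perm: "is_perm p \<Longrightarrow> gamma (inv_perm p) = p"
  using gamma_map_pos[of p "\<lambda>j. j"] by (simp add: inv_perm_def)

lemma finite_active_sites_before: "finite {i. 1 \<le> i \<and> i < j \<and> eta_active p i}"
  by (rule finite_subset[of _ "{..<j}"]) auto

lemma upsilon_mono: "i \<le> j \<Longrightarrow> upsilon p i \<le> upsilon p j"
  unfolding upsilon_def Suc_le_mono by (intro card_mono finite_active_sites_before) auto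

lemma upsilon_strict_mono_ascent:
  assumes "a < b" "b < length p" "p ! a < p ! b"
  shows "upsilon p (Suc a) < upsilon p (Suc b)"
proof -
  obtain i where i: "a \<le> i" "i < b" "p ! i < p ! Suc i"
    using exists_ascent_between[OF assms(1,3)] by blast
  then have "eta_active p (Suc i)"
    using assms(2) by (simp add: eta_active_def)
  then have "Suc i \<in> {i. 1 \<le> i \<and> i < Suc b \<and> eta_active p i} - {i. 1 \<le> i \<and> i < Suc a \<and> eta_active p i}"
    using i by simp
  moreover have "{i. 1 \<le> i \<and> i < Suc a \<and> eta_active p i} \<subseteq> {i. 1 \<le> i \<and> i < Suc b \<and> eta_active p i}"
    using assms(1) by auto
  ultimately have "{i. 1 \<le> i \<and> i < Suc a \<and> eta_active p i} \<subset> {i. 1 \<le> i \<and> i < Suc b \<and> eta_active p i}"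
    by blast
  then show ?thesis
    unfolding upsilon_def Suc_less_eq by (rule psubset_card_mono[OF finite_active_sites_before])
qed

lemma gamma_eta: "is_perm p \<Longrightarrow> gamma (eta p) = p"
  unfolding eta_def by (rule gamma_map_pos) (auto intro: upsilon_mono upsilon_strict_mono_ascent)

lemma gamma_image_Xset: "gamma ` Xset = {p. is_perm p}"
  unfolding Xset_def image_image using is_perm_gamma gamma_eta by force

theorem theorem7p2:
  assumes "is_perm \<sigma>" and "cayley y"
  shows "Av_perm \<sigma> = gamma ` avoid_class Xset (inv_perm \<sigma>)
       \<and> gamma ` avoid_class Xset y = Av_perm (gamma y)"
proof -
  have "gamma ` avoid_class Xset z = Av_perm (gamma z)" for z
    by (auto simp: gamma_image_avoid_class gamma_image_Xset Av_perm_def)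
  then show ?thesis
    using gamma_inv_perm[OF assms(1)] by simp
qed

end
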